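(* Let $K\subseteq\mathbb{R}^d$ be a convex body with $\mathrm{width}(K)>0$. Then $\lambda_d(K-K)\le\frac{\mathrm{Flt}(d)}{\mathrm{width}(K)}$.
   Context: A convex body is a non-empty compact convex subset of $\mathbb{R}^d$; $\mathrm{width}(K)=\min_{u\in(\mathbb{Z}^d)^*\setminus\{0\}}\max_{x,y\in K}|u(x)-u(y)|$; $\mathrm{Flt}(d)=\sup\{\mathrm{width}(K): K\text{ convex body}, K\cap\mathbb{Z}^d=\emptyset\}$. The difference body is $K-K=\{x-y:x,y\in K\}$, and its $d$-th successive minimum is $\lambda_d(K-K)=\inf\{\lambda>0:\dim\mathrm{span}(\lambda(K-K)\cap\mathbb{Z}^d)=d\}$. *)

theory Defs
  imports "HOL-Analysis.Analysis"
begin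

definition int_points :: "(real^'n) set" where
  "int_points = {x. \<forall>i. x $ i \<in> \<int>}"

definition convex_body :: "(real^'n) set \<Rightarrow> bool" where
  "convex_body K \<longleftrightarrow> K \<noteq> {} \<and> compact K \<and> convex K"

text \<open>Lattice width: dual lattice functionals u are integer vectors acting by inner product.\<close>
definition lattice_width :: "(real^'n) set \<Rightarrow> real" where
  "lattice_width K =
     Inf ((\<lambda>u. Sup {\<bar>u \<bullet> x - u \<bullet> y\<bar> | x y. x \<in> K \<and> y \<in> K}) ` (int_points - {0}))"

definition Flt :: "'n::finite itself \<Rightarrow> ereal" where
  "Flt _ = Sup {ereal (lattice_width K) | K :: (real^'n) set.
                   convex_body K \<and> K \<inter> int_points = {}}"

definition diff_body :: "(real^'n) set \<Rightarrow> (real^'n) set" where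
  "diff_body K = {x - y | x y. x \<in> K \<and> y \<in> K}"

text \<open>d-th successive minimum (d = CARD('n)), as an extended real (Inf of empty set = \<infinity>).\<close>
definition lambda_d :: "(real^'n) set \<Rightarrow> ereal" where
  "lambda_d C = Inf {ereal t | t. t > 0 \<and>
       dim (span ((\<lambda>x. t *\<^sub>R x) ` C \<inter> int_points)) = CARD('n)}"

end

theory Submission
  imports Defs
begin

text \<open>For \<open>t > Flt(d) / width(K)\<close> every translate of \<open>-tK\<close> has lattice width above the flatness
  constant and therefore meets \<open>\<int>\<^sup>d\<close>, i.e. \<open>tK + \<int>\<^sup>d = \<real>\<^sup>d\<close>. If the lattice vectors in
  \<open>tK - tK\<close> spanned a proper subspace \<open>L\<close>, the sets \<open>(\<int>\<^sup>d \<inter> L) + tK\<close> and \<open>(\<int>\<^sup>d - L) + tK\<close>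
  would be disjoint, closed, non-empty and cover \<open>\<real>\<^sup>d\<close>, contradicting connectedness.\<close>

lemma int_points_diff: "x \<in> int_points \<Longrightarrow> y \<in> int_points \<Longrightarrow> x - y \<in> int_points"
  by (auto simp: int_points_def)

lemma zero_in_int_points: "0 \<in> int_points"
  by (simp add: int_points_def)

lemma axis_in_int_points: "axis i 1 \<in> int_points"
  by (auto simp: int_points_def axis_def)

lemma int_points_minus_zero_nonempty: "int_points - {0} \<noteq> {}"
  using axis_in_int_points axis_eq_0_iff by fastforce

lemma span_int_points: "span int_points = UNIV"
proof -
  have "Basis \<subseteq> int_points"
    using axis_inverse axis_in_int_points by blast
  then show ?thesis
    using span_mono span_Basis by blast
qed

lemma closed_subset_int_points:
  assumes "S \<subseteq> int_points"
  shows "closed S"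
proof (rule discrete_imp_closed[of 1])
  show "\<forall>x\<in>S. \<forall>y\<in>S. dist y x < 1 \<longrightarrow> y = x"
  proof (intro ballI impI)
    fix x y assume xy: "x \<in> S" "y \<in> S" "dist y x < 1"
    show "y = x"
    proof (rule vec_eq_iff[THEN iffD2], rule allI)
      fix i
      have "y $ i \<in> \<int>" "x $ i \<in> \<int>"
        using xy assms by (auto simp: int_points_def)
      moreover have "\<bar>y $ i - x $ i\<bar> < 1"
        using component_le_norm_cart[of "y - x" i] xy(3) by (simp add: dist_norm)
      ultimately show "y $ i = x $ i"
        using Ints_eq_abs_less1 by blast
    qed
  qed
qed simp

definition directional_width :: "(real^'n) set \<Rightarrow> real^'n \<Rightarrow> real" where
  "directional_width K u = Sup {\<bar>u \<bullet> x - u \<bullet> y\<bar> | x y. x \<in> K \<and> y \<in> K}"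

lemma lattice_width_eq_INF:
  "lattice_width K = (INF u \<in> int_points - {0}. directional_width K u)"
  by (simp add: lattice_width_def directional_width_def)

lemma bdd_above_directional_diffs:
  assumes "bounded K"
  shows "bdd_above {\<bar>u \<bullet> x - u \<bullet> y\<bar> | x y. x \<in> K \<and> y \<in> K}"
proof -
  obtain B where B: "\<forall>a\<in>K. norm a \<le> B"
    using assms bounded_iff by blast
  show ?thesis
  proof (rule bdd_aboveI, clarify)
    fix x y assume xy: "x \<in> K" "y \<in> K"
    have "\<bar>u \<bullet> x - u \<bullet> y\<bar> \<le> norm u * norm (x - y)"
      using Cauchy_Schwarz_ineq2[of u "x - y"] by (simp add: inner_diff_right)
    also have "\<dots> \<le> norm u * (B + B)"
    proof (rule mult_left_mono)
      have "norm x \<le> B" "norm y \<le> B"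
        using B xy by auto
      then show "norm (x - y) \<le> B + B"
        using norm_triangle_ineq4[of x y] by linarith
    qed simp
    finally show "\<bar>u \<bullet> x - u \<bullet> y\<bar> \<le> norm u * (B + B)" .
  qed
qed

lemma directional_width_nonneg:
  assumes "bounded K" "K \<noteq> {}"
  shows "0 \<le> directional_width K u"
proof -
  obtain k where "k \<in> K"
    using assms by blast
  then have "0 \<in> {\<bar>u \<bullet> x - u \<bullet> y\<bar> | x y. x \<in> K \<and> y \<in> K}"
    by force
  then show ?thesis
    unfolding directional_width_def
    by (rule cSup_upper[OF _ bdd_above_directional_diffs[OF assms(1)]])
qed

lemma directional_width_affinity:
  assumes "bounded K" "K \<noteq> {}"
  shows "directional_width ((\<lambda>x. a + c *\<^sub>R x) ` K) u = \<bar>c\<bar> * directional_width K u"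
proof -
  define D where "D = {\<bar>u \<bullet> x - u \<bullet> y\<bar> | x y. x \<in> K \<and> y \<in> K}"
  have scale: "\<bar>u \<bullet> (a + c *\<^sub>R x) - u \<bullet> (a + c *\<^sub>R y)\<bar> = \<bar>c\<bar> * \<bar>u \<bullet> x - u \<bullet> y\<bar>" for x y
    by (simp add: inner_add_right flip: abs_mult right_diff_distrib)
  have "{\<bar>u \<bullet> x - u \<bullet> y\<bar> | x y. x \<in> (\<lambda>x. a + c *\<^sub>R x) ` K \<and> y \<in> (\<lambda>x. a + c *\<^sub>R x) ` K}
      = (\<lambda>s. \<bar>c\<bar> * s) ` D"
  proof (intro equalityI subsetI)
    fix s assume "s \<in> {\<bar>u \<bullet> x - u \<bullet> y\<bar> | x y. x \<in> (\<lambda>x. a + c *\<^sub>R x) ` K \<and> y \<in> (\<lambda>x. a + c *\<^sub>R x) ` K}"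
    then obtain x y where "x \<in> K" "y \<in> K" "s = \<bar>c\<bar> * \<bar>u \<bullet> x - u \<bullet> y\<bar>"
      using scale by blast
    then show "s \<in> (\<lambda>s. \<bar>c\<bar> * s) ` D"
      unfolding D_def by blast
  next
    fix s assume "s \<in> (\<lambda>s. \<bar>c\<bar> * s) ` D"
    then obtain x y where "x \<in> K" "y \<in> K" "s = \<bar>u \<bullet> (a + c *\<^sub>R x) - u \<bullet> (a + c *\<^sub>R y)\<bar>"
      unfolding D_def using scale by auto
    then show "s \<in> {\<bar>u \<bullet> x - u \<bullet> y\<bar> | x y. x \<in> (\<lambda>x. a + c *\<^sub>R x) ` K \<and> y \<in> (\<lambda>x. a + c *\<^sub>R x) ` K}"
      by blast
  qed
  moreover have "\<bar>c\<bar> * Sup D = (SUP s \<in> D. \<bar>c\<bar> * s)"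
  proof (rule continuous_at_Sup_mono)
    show "mono (\<lambda>s. \<bar>c\<bar> * s)"
      by (simp add: mono_def mult_left_mono)
    show "continuous (at_left (Sup D)) (\<lambda>s. \<bar>c\<bar> * s)"
      by (intro continuous_intros)
    show "D \<noteq> {}"
      using assms(2) unfolding D_def by blast
    show "bdd_above D"
      unfolding D_def by (rule bdd_above_directional_diffs[OF assms(1)])
  qed
  ultimately show ?thesis
    by (simp add: directional_width_def D_def)
qed

lemma lattice_width_affinity:
  assumes "bounded K" "K \<noteq> {}"
  shows "lattice_width ((\<lambda>x. a + c *\<^sub>R x) ` K) = \<bar>c\<bar> * lattice_width K"
proof -
  define W where "W = directional_width K ` (int_points - {0})"
  have "\<bar>c\<bar> * Inf W = (INF s \<in> W. \<bar>c\<bar> * s)"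
  proof (rule continuous_at_Inf_mono)
    show "mono (\<lambda>s. \<bar>c\<bar> * s)"
      by (simp add: mono_def mult_left_mono)
    show "continuous (at_right (Inf W)) (\<lambda>s. \<bar>c\<bar> * s)"
      by (intro continuous_intros)
    show "W \<noteq> {}"
      using int_points_minus_zero_nonempty unfolding W_def by blast
    show "bdd_below W"
      using directional_width_nonneg[OF assms] unfolding W_def by (intro bdd_belowI2)
  qed
  then show ?thesis
    unfolding W_def image_image
    by (simp add: lattice_width_eq_INF directional_width_affinity[OF assms])
qed

lemma convex_body_affinity:
  "convex_body K \<Longrightarrow> convex_body ((\<lambda>x. a + c *\<^sub>R x) ` K)"
  by (auto simp: convex_body_def compact_affinity convex_affinity)

lemma lattice_width_le_Flt:
  fixes K :: "(real^'n) set"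
  assumes "convex_body K" "K \<inter> int_points = {}"
  shows "ereal (lattice_width K) \<le> Flt TYPE('n)"
  unfolding Flt_def by (rule Sup_upper) (use assms in blast)

lemma Flt_nonneg: "0 \<le> Flt TYPE('n::finite)"
proof -
  define p :: "real^'n" where "p = (\<chi> i. 1/2)"
  have "(1/2 :: real) \<notin> \<int>"
    using Ints_nonzero_abs_ge1[of "1/2 :: real"] by auto
  then have "{p} \<inter> int_points = {}"
    by (auto simp: int_points_def p_def)
  moreover have "lattice_width {p} = 0"
    by (simp add: lattice_width_eq_INF directional_width_def cINF_const[OF int_points_minus_zero_nonempty])
  ultimately show ?thesis
    using lattice_width_le_Flt[of "{p}"] by (simp add: convex_body_def zero_ereal_def)
qed

lemma affinity_meets_int_points:
  fixes K :: "(real^'n) set"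
  assumes K: "convex_body K"
    and wide: "Flt TYPE('n) < ereal (\<bar>c\<bar> * lattice_width K)"
  shows "(\<lambda>x. a + c *\<^sub>R x) ` K \<inter> int_points \<noteq> {}"
proof
  assume "(\<lambda>x. a + c *\<^sub>R x) ` K \<inter> int_points = {}"
  then have "ereal (lattice_width ((\<lambda>x. a + c *\<^sub>R x) ` K)) \<le> Flt TYPE('n)"
    using lattice_width_le_Flt convex_body_affinity[OF K] by blast
  with wide K show False
    by (simp add: lattice_width_affinity convex_body_def compact_imp_bounded)
qed

lemma diff_body_scaling: "diff_body ((\<lambda>x. t *\<^sub>R x) ` K) = (\<lambda>x. t *\<^sub>R x) ` diff_body K"
proof (intro equalityI subsetI)
  fix v assume "v \<in> diff_body ((\<lambda>x. t *\<^sub>R x) ` K)"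
  then obtain x y where "x \<in> K" "y \<in> K" "v = t *\<^sub>R (x - y)"
    by (auto simp: diff_body_def scaleR_diff_right)
  then show "v \<in> (\<lambda>x. t *\<^sub>R x) ` diff_body K"
    unfolding diff_body_def by blast
next
  fix v assume "v \<in> (\<lambda>x. t *\<^sub>R x) ` diff_body K"
  then obtain x y where "x \<in> K" "y \<in> K" "v = t *\<^sub>R x - t *\<^sub>R y"
    by (auto simp: diff_body_def scaleR_diff_right)
  then show "v \<in> diff_body ((\<lambda>x. t *\<^sub>R x) ` K)"
    unfolding diff_body_def by blast
qed

lemma span_diff_body_int_points_if_covering:
  fixes C :: "(real^'n) set"
  assumes "compact C"
    and cover: "\<And>y. \<exists>z\<in>int_points. y - z \<in> C"
  shows "span (diff_body C \<inter> int_points) = UNIV"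
proof (rule ccontr)
  define L where "L = span (diff_body C \<inter> int_points)"
  assume "span (diff_body C \<inter> int_points) \<noteq> UNIV"
  then obtain w where w: "w \<in> int_points" "w \<notin> L"
    using span_int_points span_minimal[OF _ subspace_span, of int_points "diff_body C \<inter> int_points"]
    unfolding L_def by blast
  obtain c where c: "c \<in> C"
    using cover by blast
  define A where "A = (\<Union>z \<in> int_points \<inter> L. \<Union>y \<in> C. {z + y})"
  define B where "B = (\<Union>z \<in> int_points - L. \<Union>y \<in> C. {z + y})"
  have "closed A" "closed B"
    unfolding A_def B_def
    by (rule closed_compact_sums[OF closed_subset_int_points \<open>compact C\<close>], blast)+
  moreover have "A \<union> B = UNIV"
  proof -
    have "y \<in> A \<union> B" for y
    proof -
      obtain z where "z \<in> int_points" "y - z \<in> C"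
        using cover by blast
      moreover have "y = z + (y - z)"
        by simp
      ultimately show ?thesis
        unfolding A_def B_def by blast
    qed
    then show ?thesis by blast
  qed
  moreover have "A \<inter> B = {}"
  proof (rule ccontr)
    assume "A \<inter> B \<noteq> {}"
    then obtain z1 c1 z2 c2 where z: "z1 \<in> int_points" "z1 \<in> L" "c1 \<in> C"
        "z2 \<in> int_points" "z2 \<notin> L" "c2 \<in> C" "z1 + c1 = z2 + c2"
      unfolding A_def B_def by auto
    have "z2 - z1 = c1 - c2"
      using z(7) by (simp add: algebra_simps)
    then have "z2 - z1 \<in> diff_body C \<inter> int_points"
      using z int_points_diff unfolding diff_body_def by blast
    then have "z2 - z1 \<in> L"
      unfolding L_def by (rule span_base)
    then have "z1 + (z2 - z1) \<in> L"
      using z(2) unfolding L_def by (rule span_add[rotated])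
    with z(5) show False by simp
  qed
  moreover have "0 + c \<in> A"
    using c zero_in_int_points span_0 unfolding A_def L_def by blast
  moreover have "w + c \<in> B"
    using c w unfolding B_def by blast
  ultimately show False
    using connected_closedD[OF connected_UNIV, of A B] by auto
qed

lemma lambda_d_le:
  fixes C :: "(real^'n) set"
  assumes "t > 0" "span ((\<lambda>x. t *\<^sub>R x) ` C \<inter> int_points) = UNIV"
  shows "lambda_d C \<le> ereal t"
proof -
  have "dim (span ((\<lambda>x. t *\<^sub>R x) ` C \<inter> int_points)) = CARD('n)"
    unfolding assms(2) by simp
  then show ?thesis
    unfolding lambda_d_def by (intro Inf_lower) (use assms(1) in blast)
qed

theorem lemma4p1:
  fixes K :: "(real^'n) set"
  assumes "convex_body K"
    and "lattice_width K > 0"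
  shows "lambda_d (diff_body K) \<le> Flt TYPE('n) / ereal (lattice_width K)"
proof (rule dense_ge)
  fix s assume s: "Flt TYPE('n) / ereal (lattice_width K) < s"
  show "lambda_d (diff_body K) \<le> s"
  proof (cases s)
    case (real t)
    have "0 \<le> Flt TYPE('n) / ereal (lattice_width K)"
      using assms(2) by (intro zero_le_divide_ereal Flt_nonneg) simp
    with s real have "0 < ereal t"
      by (blast intro: le_less_trans)
    then have t: "t > 0" by simp
    have wide: "Flt TYPE('n) < ereal (\<bar>-t\<bar> * lattice_width K)"
      using s real assms(2) t by (simp add: ereal_divide_less_iff)
    have "\<exists>z\<in>int_points. y - z \<in> (\<lambda>x. t *\<^sub>R x) ` K" for y
      using affinity_meets_int_points[OF assms(1) wide, of y] by force
    then have "span (diff_body ((\<lambda>x. t *\<^sub>R x) ` K) \<inter> int_points) = UNIV"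
      using assms(1) by (intro span_diff_body_int_points_if_covering)
        (auto simp: convex_body_def compact_scaling)
    then show ?thesis
      using lambda_d_le[OF t] real by (simp add: diff_body_scaling)
  qed (use s in auto)
qed

end
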